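(* Let $0<s<1$, $0<\tilde\delta<1/16$ and $1<\tilde R<1/s$, and let $n_0$ be the constant of the context. Then there exists $m_0''\in\mathbb{N}$ (depending on $s,\tilde\delta,\tilde R$) such that whenever $m>m_0''$, $1< R<\min(\tilde R,3/2)$, $(r_j)_{j=1}^{m-1}\in E_{\varepsilon}$ with $\varepsilon=\log(R^{1/n_0})$, $w\in\overline D(0,3/4)$ and $\tilde\delta\le\delta\le 1/16$, the map $\iota=\iota^{w,\delta,m,R,(r_j)}$ satisfies \[\operatorname{supp}(\iota_{\bar z})\subset\{z\in\mathbb{D}:|z|>s\}.\]
   Context: $\psi_{\delta,m}$: with $b(x)=\exp(1+\frac1{x^2-1})$ for $0\le x<1$, $b(x)=0$ for $x\ge 1$, $r=1-4\delta/m$, $\hat\eta(x)=1$ for $x\le r$, $\hat\eta(x)=b(\frac{x-r}{1-r})$ for $r\le x\le1$, $\hat\eta(x)=0$ for $x\ge1$, set $\psi_{\delta,m}(z)=z^m+\delta z\hat\eta(|z|)$ on $\mathbb{D}$. $\beta_{R,M,(r_j)}$ for $M\in\mathbb N$, $R>1$, $(r_j)_{j=1}^M\in E_\varepsilon$ (where $\xi_j=e^{(2j-1)\pi i/M}$ and $E_\varepsilon=\{(r_j)\in\prod_{j=1}^M\exp(\overline D(0,\varepsilon)):\frac{r_{j+1}\xi_{j+1}-r_j\xi_j}{\xi_{j+1}-\xi_j}\in\exp(\overline D(0,\varepsilon)),1\le j\le M\}$, indices mod $M$): it equals the identity on $|z|\ge R$ and $|z|\le R^{-1}$, and on $R^{-1}<|z|<R$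 it is $\beta(e^\zeta)=e^{\hat\beta(\zeta)}$ where $\hat\beta$ is the $2\pi i$-periodic piecewise affine map on the strip $|\operatorname{Re}\zeta|\le\log R$, affine on the triangles $(a_j,a_{j+1},a_j^{\pm})$, $(a_{j+1},a_j^{\pm},a_{j+1}^{\pm})$ with $a_j=(2j-1)\pi i/M$, $a_j^\pm=\pm\log R+a_j$, fixing $a_j^\pm$ and sending $a_j\mapsto a_j+\operatorname{Log}r_j$. There are constants $m_0'$, $n_0$ such that for $M>m_0'$, $1<R<3/2$, $\varepsilon=\log(R^{1/n_0})$ this $\beta$ is a quasiconformal homeomorphism of $\mathbb{C}$ with $\beta(\xi_j)=r_j\xi_j$. For $\Lambda>0$ set $\beta^\Lambda(z)=\Lambda\beta(z/\Lambda)$. $\rho_w$ for $w\in\overline D(0,3/4)$: $\rho_w(z)=z+w$ for $|z|\le1/8$ and $\rho_w(z)=z\frac{8|z|-1}{7}+(z+w)\frac{8-8|z|}{7}$ for $1/8\le|z|\le1$. $\Lambda(\delta,m)=\delta(\delta/m)^{1/(m-1)}\frac{m-1}{m}$, and $\iota^{w,\delta,m,R,(r_j)}=\rho_w\circ\beta^{\Lambda(\delta,m)}_{R,m-1,(r_j)_{j=1}^{m-1}}\circ\psi_{\delta,m}:\mathbb{D}\to\mathbb{D}$. *)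

theory Defs
  imports "HOL-Complex_Analysis.Complex_Analysis"
begin

definition bump :: "real \<Rightarrow> real" where
  "bump x = (if x < 1 then exp (1 + 1 / (x\<^sup>2 - 1)) else 0)"

definition eta_hat :: "real \<Rightarrow> real \<Rightarrow> real" where
  "eta_hat r x = (if x \<le> r then 1 else if x \<le> 1 then bump ((x - r) / (1 - r)) else 0)"

definition psi :: "real \<Rightarrow> nat \<Rightarrow> complex \<Rightarrow> complex" where
  "psi \<delta> m z = z ^ m + of_real \<delta> * z * of_real (eta_hat (1 - 4 * \<delta> / real m) (norm z))"

definition xi :: "nat \<Rightarrow> int \<Rightarrow> complex" where
  "xi M j = exp (of_real ((2 * of_int j - 1) * pi / real M) * \<i>)"

definition ridx :: "nat \<Rightarrow> int \<Rightarrow> nat" where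
  "ridx M j = nat ((j - 1) mod int M) + 1"

definition E_set :: "real \<Rightarrow> nat \<Rightarrow> (nat \<Rightarrow> complex) set" where
  "E_set \<epsilon> M = {r. (\<forall>j\<in>{1..M}. r j \<in> exp ` cball 0 \<epsilon>) \<and>
     (\<forall>j\<in>{1..int M}.
        (r (ridx M (j+1)) * xi M (j+1) - r (ridx M j) * xi M j) / (xi M (j+1) - xi M j)
          \<in> exp ` cball 0 \<epsilon>)}"

text \<open>Displacement beta_hat(zeta) - zeta on the strip |Re zeta| <= log R: it is the affine
  interpolation on the triangles (a_j,a_(j+1),a_j^+-), (a_(j+1),a_j^+-,a_(j+1)^+-) of the values
  Log r_j at a_j and 0 at a_j^+-.  Here u = |Re zeta|/log R and t is the relative height of
  Im zeta in the band [Im a_j, Im a_(j+1)].\<close>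

definition beta_hat :: "real \<Rightarrow> nat \<Rightarrow> (nat \<Rightarrow> complex) \<Rightarrow> complex \<Rightarrow> complex" where
  "beta_hat R M r \<zeta> =
    (let L = ln R; u = \<bar>Re \<zeta>\<bar> / L;
         j = \<lfloor>(Im \<zeta> * real M / pi + 1) / 2\<rfloor>;
         t = (Im \<zeta> - (2 * of_int j - 1) * pi / real M) / (2 * pi / real M);
         cj = Ln (r (ridx M j)); cj1 = Ln (r (ridx M (j + 1)));
         d = (if u + t \<le> 1 then of_real (1 - u - t) * cj + of_real t * cj1
              else of_real (1 - u) * cj1)
     in \<zeta> + d)"

definition beta :: "real \<Rightarrow> nat \<Rightarrow> (nat \<Rightarrow> complex) \<Rightarrow> complex \<Rightarrow> complex" where
  "beta R M r z = (if norm z \<ge> R \<or> norm z \<le> 1 / R then z else exp (beta_hat R M r (Ln z)))"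

definition beta_scaled :: "real \<Rightarrow> real \<Rightarrow> nat \<Rightarrow> (nat \<Rightarrow> complex) \<Rightarrow> complex \<Rightarrow> complex" where
  "beta_scaled \<Lambda> R M r z = of_real \<Lambda> * beta R M r (z / of_real \<Lambda>)"

definition rho :: "complex \<Rightarrow> complex \<Rightarrow> complex" where
  "rho w z = (if norm z \<le> 1/8 then z + w
              else if norm z \<le> 1 then z * of_real ((8 * norm z - 1) / 7) + (z + w) * of_real ((8 - 8 * norm z) / 7)
              else z)"

definition Lam :: "real \<Rightarrow> nat \<Rightarrow> real" where
  "Lam \<delta> m = \<delta> * (\<delta> / real m) powr (1 / (real m - 1)) * (real m - 1) / real m"

definition iota :: "complex \<Rightarrow> real \<Rightarrow> nat \<Rightarrow> real \<Rightarrow> (nat \<Rightarrow> complex) \<Rightarrow> complex \<Rightarrow> complex" where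
  "iota w \<delta> m R r = rho w \<circ> beta_scaled (Lam \<delta> m) R (m - 1) r \<circ> psi \<delta> m"

text \<open>For a continuous f on an open set U, the (distributional) support of f_zbar is the
  complement in U of the set of points having an open neighbourhood in U on which f is
  holomorphic (Weyl's lemma).\<close>

definition dbar_support :: "(complex \<Rightarrow> complex) \<Rightarrow> complex set \<Rightarrow> complex set" where
  "dbar_support f U = U - {z. \<exists>V. open V \<and> z \<in> V \<and> V \<subseteq> U \<and> f holomorphic_on V}"

end

theory Submission
  imports Defs "HOL-Real_Asymp.Real_Asymp"
begin

text \<open>Near the origin every factor of the composition is trivial: for large m and
  |z| \<le> \<rho> with s < \<rho> < 1/Rt, the cut-off in psi equals 1, so psi z = z^m + \<delta> z is
  tiny compared with Lam \<delta> m \<approx> \<delta>, hence lies in the disc of radius Lam/R on which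
  the rescaled beta is the identity, and in the disc of radius 1/8 on which rho is a
  translation. Thus iota is the polynomial z^m + \<delta> z + w on the disc of radius \<rho>
  (whatever the r_j are), and its dbar-derivative vanishes there.\<close>

lemma dbar_support_subset_Diff:
  assumes "open V" "V \<subseteq> U" "f holomorphic_on V"
  shows "dbar_support f U \<subseteq> U - V"
  using assms by (auto simp: dbar_support_def)

lemma psi_eq_polynomial:
  assumes "norm z \<le> 1 - 4 * \<delta> / real m"
  shows "psi \<delta> m z = z ^ m + of_real \<delta> * z"
  using assms by (simp add: psi_def eta_hat_def)

lemma beta_scaled_eq_self:
  assumes "0 < \<Lambda>" "norm z \<le> \<Lambda> / R"
  shows "beta_scaled \<Lambda> R M r z = z"
proof -
  have "norm (z / of_real \<Lambda>) = norm z / \<Lambda>"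
    using assms(1) by (simp add: norm_divide)
  also have "\<dots> \<le> (\<Lambda> / R) / \<Lambda>"
    using assms by (intro divide_right_mono) auto
  also have "\<dots> = 1 / R"
    using assms(1) by simp
  finally show ?thesis
    using assms(1) by (simp add: beta_scaled_def beta_def)
qed

lemma rho_eq_translation:
  assumes "norm z \<le> 1/8"
  shows "rho w z = z + w"
  using assms by (simp add: rho_def)

lemma Lam_pos:
  assumes "0 < \<delta>" "2 \<le> m"
  shows "0 < Lam \<delta> m"
  using assms by (simp add: Lam_def)

lemma Lam_ge_scaled:
  assumes "0 < \<delta>t" "\<delta>t \<le> \<delta>" "2 \<le> m"
  shows "\<delta> * (Lam \<delta>t m / \<delta>t) \<le> Lam \<delta> m"
proof -
  have "(\<delta>t / real m) powr (1 / (real m - 1)) \<le> (\<delta> / real m) powr (1 / (real m - 1))"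
    using assms by (intro powr_mono2) (auto simp: divide_right_mono)
  then have "\<delta> * (\<delta>t / real m) powr (1 / (real m - 1)) \<le> \<delta> * (\<delta> / real m) powr (1 / (real m - 1))"
    using assms by (intro mult_left_mono) auto
  then show ?thesis
    using assms by (simp add: Lam_def divide_right_mono mult_right_mono)
qed

lemma Lam_div_tendsto_1:
  assumes "0 < \<delta>"
  shows "(\<lambda>m. Lam \<delta> m / \<delta>) \<longlonglongrightarrow> 1"
proof -
  have "(\<lambda>m::nat. (\<delta> / real m) powr (1 / (real m - 1)) * (real m - 1) / real m) \<longlonglongrightarrow> 1"
    using assms by real_asymp
  then show ?thesis
    using assms by (simp add: Lam_def)
qed

lemma iota_eq_polynomial:
  assumes "0 \<le> \<delta>" "0 < Lam \<delta> m" "norm z \<le> 1 - 4 * \<delta> / real m"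
    and "norm z ^ m + \<delta> * norm z \<le> Lam \<delta> m / R" "norm z ^ m + \<delta> * norm z \<le> 1/8"
  shows "iota w \<delta> m R r z = z ^ m + of_real \<delta> * z + w"
proof -
  define p where "p = z ^ m + of_real \<delta> * z"
  have "norm p \<le> norm z ^ m + \<delta> * norm z"
    unfolding p_def using assms(1) norm_triangle_ineq[of "z ^ m" "of_real \<delta> * z"]
    by (simp add: norm_mult norm_power)
  then have "beta_scaled (Lam \<delta> m) R (m - 1) r p = p" "rho w p = p + w"
    using assms by (auto intro: beta_scaled_eq_self rho_eq_translation)
  then show ?thesis
    using assms(3) by (simp add: iota_def psi_eq_polynomial p_def)
qed

lemma iota_holomorphic_on_ball:
  assumes "0 \<le> \<delta>" "0 < Lam \<delta> m" "\<rho> \<le> 1 - 4 * \<delta> / real m"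
    and "\<rho> ^ m + \<delta> * \<rho> \<le> Lam \<delta> m / R" "\<rho> ^ m + \<delta> * \<rho> \<le> 1/8"
  shows "iota w \<delta> m R r holomorphic_on ball 0 \<rho>"
proof (rule holomorphic_transform)
  show "(\<lambda>z. z ^ m + of_real \<delta> * z + w) holomorphic_on ball 0 \<rho>"
    by (intro holomorphic_intros)
next
  fix z :: complex
  assume "z \<in> ball 0 \<rho>"
  then have "norm z \<le> \<rho>" by simp
  then have "norm z ^ m + \<delta> * norm z \<le> \<rho> ^ m + \<delta> * \<rho>"
    using assms(1) by (intro add_mono power_mono mult_left_mono) auto
  with \<open>norm z \<le> \<rho>\<close> show "z ^ m + of_real \<delta> * z + w = iota w \<delta> m R r z"
    using assms by (intro iota_eq_polynomial[symmetric]) auto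
qed

lemma eventually_disc_bounds:
  fixes \<delta>t Rt \<rho> :: real
  assumes "0 < \<delta>t" "0 < Rt" "0 < \<rho>" "\<rho> < 1" "\<rho> < 1 / Rt"
  shows "\<forall>\<^sub>F m in sequentially. 2 \<le> m \<and> (\<forall>\<delta>. \<delta>t \<le> \<delta> \<longrightarrow> \<delta> \<le> 1/16 \<longrightarrow>
           \<rho> \<le> 1 - 4 * \<delta> / real m \<and> \<rho> ^ m + \<delta> * \<rho> \<le> Lam \<delta> m / Rt \<and> \<rho> ^ m + \<delta> * \<rho> \<le> 1/8)"
proof -
  define c where "c m = Lam \<delta>t m / \<delta>t" for m
  \<comment> \<open>\<rho>^m decays while c m \<longrightarrow> 1, so \<rho>^m + \<delta> \<rho> < \<delta> c m / Rt \<le> Lam \<delta> m / Rt as \<rho> < 1/Rt.\<close>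
  have "(\<lambda>m. \<delta>t * (c m / Rt - \<rho>) - \<rho> ^ m) \<longlonglongrightarrow> \<delta>t * (1 / Rt - \<rho>) - 0"
    unfolding c_def using assms
    by (intro tendsto_intros Lam_div_tendsto_1 LIMSEQ_realpow_zero) auto
  moreover have "0 < \<delta>t * (1 / Rt - \<rho>) - 0"
    using assms by simp
  ultimately have ev_Lam: "\<forall>\<^sub>F m in sequentially. \<rho> ^ m < \<delta>t * (c m / Rt - \<rho>)"
    by (auto dest: order_tendstoD(1))
  have ev_pow: "\<forall>\<^sub>F m in sequentially. \<rho> ^ m \<le> 1/16"
    using order_tendstoD(2)[OF LIMSEQ_realpow_zero[of \<rho>], of "1/16"] assms
    by (auto elim: eventually_mono)
  have ev_cutoff: "\<forall>\<^sub>F m::nat in sequentially. \<rho> \<le> 1 - 1 / (4 * real m)"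
    using assms by real_asymp
  show ?thesis
    using ev_Lam ev_pow ev_cutoff eventually_ge_at_top[of 2]
  proof eventually_elim
    case (elim m)
    have "0 < c m / Rt - \<rho>"
    proof -
      have "0 \<le> \<rho> ^ m"
        using assms(3) by simp
      then have "0 < \<delta>t * (c m / Rt - \<rho>)"
        using elim(1) by linarith
      then show ?thesis
        using assms(1) zero_less_mult_pos by blast
    qed
    show ?case
    proof (intro conjI allI impI)
      fix \<delta> :: real
      assume \<delta>: "\<delta>t \<le> \<delta>" "\<delta> \<le> 1/16"
      have "\<rho> ^ m + \<delta> * \<rho> \<le> \<delta> * (c m / Rt - \<rho>) + \<delta> * \<rho>"
        using elim(1) \<delta>(1) \<open>0 < c m / Rt - \<rho>\<close> by (smt (verit) mult_right_mono)
      also have "\<dots> = \<delta> * c m / Rt"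
        by (simp add: algebra_simps)
      also have "\<dots> \<le> Lam \<delta> m / Rt"
        unfolding c_def using \<delta> assms elim(4) by (intro divide_right_mono Lam_ge_scaled) auto
      finally show "\<rho> ^ m + \<delta> * \<rho> \<le> Lam \<delta> m / Rt" .
      have "\<delta> * \<rho> \<le> 1/16"
        using \<delta> assms mult_mono[of \<delta> "1/16" \<rho> 1] by simp
      then show "\<rho> ^ m + \<delta> * \<rho> \<le> 1/8"
        using elim(2) by linarith
      have "4 * \<delta> / real m \<le> 1 / (4 * real m)"
        using \<delta>(2) elim(4) by (simp add: field_simps)
      then show "\<rho> \<le> 1 - 4 * \<delta> / real m"
        using elim(3) by linarith
    qed (use elim(4) in simp)
  qed
qed

theorem proposition3p7:
  fixes s \<delta>t Rt :: real and n0 :: nat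
  assumes "0 < s" "s < 1" "0 < \<delta>t" "\<delta>t < 1/16" "1 < Rt" "Rt < 1 / s" "n0 \<ge> 1"
  shows "\<exists>m0::nat. \<forall>m R r w \<delta>.
           m > m0 \<longrightarrow> 1 < R \<longrightarrow> R < min Rt (3/2) \<longrightarrow>
           r \<in> E_set (ln (R powr (1 / real n0))) (m - 1) \<longrightarrow>
           w \<in> cball 0 (3/4) \<longrightarrow> \<delta>t \<le> \<delta> \<longrightarrow> \<delta> \<le> 1/16 \<longrightarrow>
           dbar_support (iota w \<delta> m R r) (ball 0 1) \<subseteq> {z \<in> ball 0 1. norm z > s}"
proof -
  define \<rho> where "\<rho> = (s + 1 / Rt) / 2"
  have "s < 1 / Rt" "1 / Rt < 1"
    using assms by (auto simp: field_simps)
  then have \<rho>: "s < \<rho>" "\<rho> < 1 / Rt" "\<rho> < 1"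
    by (auto simp: \<rho>_def)
  obtain m0 where m0: "\<And>m \<delta>. m \<ge> m0 \<Longrightarrow> \<delta>t \<le> \<delta> \<Longrightarrow> \<delta> \<le> 1/16 \<Longrightarrow> 2 \<le> m \<and>
      \<rho> \<le> 1 - 4 * \<delta> / real m \<and> \<rho> ^ m + \<delta> * \<rho> \<le> Lam \<delta> m / Rt \<and> \<rho> ^ m + \<delta> * \<rho> \<le> 1/8"
    using eventually_disc_bounds[of \<delta>t Rt \<rho>] assms \<rho>
    unfolding eventually_sequentially by fastforce
  show ?thesis
  proof (intro exI allI impI)
    fix m R r w \<delta>
    assume "m > m0" "1 < R" "R < min Rt (3/2)" "\<delta>t \<le> \<delta>" "\<delta> \<le> 1/16"
    then have m: "2 \<le> m" "\<rho> \<le> 1 - 4 * \<delta> / real m" "\<rho> ^ m + \<delta> * \<rho> \<le> Lam \<delta> m / Rt"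
        "\<rho> ^ m + \<delta> * \<rho> \<le> 1/8"
      using m0[of m \<delta>] by auto
    have "0 < \<delta>"
      using assms(3) \<open>\<delta>t \<le> \<delta>\<close> by linarith
    then have "0 < Lam \<delta> m"
      using m(1) by (rule Lam_pos)
    moreover have "Lam \<delta> m / Rt \<le> Lam \<delta> m / R"
      using \<open>0 < Lam \<delta> m\<close> \<open>1 < R\<close> \<open>R < min Rt (3/2)\<close> by (intro divide_left_mono) auto
    ultimately have "iota w \<delta> m R r holomorphic_on ball 0 \<rho>"
      using \<open>0 < \<delta>\<close> m(2-4) by (intro iota_holomorphic_on_ball) auto
    then have "dbar_support (iota w \<delta> m R r) (ball 0 1) \<subseteq> ball 0 1 - ball 0 \<rho>"
      using \<rho> by (intro dbar_support_subset_Diff) auto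
    then show "dbar_support (iota w \<delta> m R r) (ball 0 1) \<subseteq> {z \<in> ball 0 1. norm z > s}"
      using \<rho> by auto
  qed
qed

end
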